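(* Fix $T>0$. For $a\in\mathbb{R}$ with $aT<1$, let $k_u(a)$ denote the unique solution $k>|a|$ of $$T\sqrt{k^2-a^2}=\arccos\!\left(\frac{a}{k}\right).$$ Then $a\mapsto k_u(a)$ is decreasing and convex on $(-\infty,1/T)$, and $$\lim_{a\to-\infty}\frac{k_u(a)}{|a|}=1,\qquad \lim_{a\to 1/T}k_u(a)=\frac1T .$$
   Context: Consider the scalar retarded system $\dot x(t)=a x(t)-k x(t-T)$ with $a,k\in\mathbb{R}$ and constant delay $T>0$. For $aT<1$, the set of gains $k$ for which this system is exponentially stable is exactly the open interval $(a,k_u)$, where $k_u$ is defined as in the claim. (For $aT\ge 1$ no stabilizing $k$ exists.) *)

theory Defs
  imports "HOL-Analysis.Analysis"
begin

definition ku :: "real \<Rightarrow> real \<Rightarrow> real" where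
  "ku T a = (THE k. \<bar>a\<bar> < k \<and> T * sqrt (k\<^sup>2 - a\<^sup>2) = arccos (a / k))"

end

theory Submission
  imports Defs "HOL-Real_Asymp.Real_Asymp" "HOL-Complex_Analysis.Conformal_Mappings"
begin

text \<open>
  Writing \<open>t = arccos (a / k) \<in> (0, \<pi>)\<close>, the equation says \<open>T k sin t = t\<close>, so its solutions
  are exactly the points \<open>a = t cos t / (T sin t)\<close>, \<open>k = t / (T sin t)\<close> of a curve parametrised
  by \<open>t \<in> (0, \<pi>)\<close>. Along it \<open>a\<close> decreases strictly from \<open>1/T\<close> to \<open>-\<infinity>\<close> while \<open>k\<close> increases,
  so \<open>k\<^sub>u\<close> is well defined and decreasing. Its slope
  \<open>dk/da = -(sin t - t cos t) / (t - sin t cos t)\<close> decreases in \<open>t\<close>, hence increases in \<open>a\<close>,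
  which is convexity. Finally \<open>t \<rightarrow> \<pi>\<close> as \<open>a \<rightarrow> -\<infinity>\<close>, where \<open>k / |a| = -1 / cos t \<rightarrow> 1\<close>, and
  \<open>t \<rightarrow> 0\<close> as \<open>a \<rightarrow> 1/T\<close>, where \<open>k = t / (T sin t) \<rightarrow> 1/T\<close>.
\<close>

lemma DERIV_pos_imp_pos_from_zero:
  fixes f :: "real \<Rightarrow> real"
  assumes "0 < t" "f 0 = 0"
    and deriv: "\<And>x. (f has_real_derivative f' x) (at x)"
    and pos: "\<And>x. 0 < x \<Longrightarrow> x < t \<Longrightarrow> f' x > 0"
  shows "f t > 0"
proof -
  have "continuous_on {0..t} f"
    using deriv by (meson DERIV_isCont continuous_at_imp_continuous_on)
  then have "f 0 < f t"
    using deriv pos by (intro DERIV_pos_imp_increasing_open[OF \<open>0 < t\<close>]) blast+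
  with \<open>f 0 = 0\<close> show ?thesis by simp
qed

lemma mult_cos_less_sin:
  assumes "0 < t" "t \<le> pi"
  shows "t * cos t < sin t"
proof -
  have "sin t - t * cos t > 0"
  proof (rule DERIV_pos_imp_pos_from_zero[OF \<open>0 < t\<close>])
    show "((\<lambda>x. sin x - x * cos x) has_real_derivative x * sin x) (at x)" for x
      by (auto intro!: derivative_eq_intros)
    show "x * sin x > 0" if "0 < x" "x < t" for x
      using that assms sin_gt_zero[of x] by simp
  qed simp
  then show ?thesis by simp
qed

lemma sin_mult_cos_less:
  assumes "0 < t" "t \<le> pi"
  shows "sin t * cos t < t"
proof -
  have "t - sin t * cos t > 0"
  proof (rule DERIV_pos_imp_pos_from_zero[OF \<open>0 < t\<close>])
    show "((\<lambda>x. x - sin x * cos x) has_real_derivative 2 * (sin x)\<^sup>2) (at x)" for x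
      by (rule derivative_eq_intros refl)+ (use sin_cos_squared_add3[of x] in algebra)
    show "2 * (sin x)\<^sup>2 > 0" if "0 < x" "x < t" for x
      using that assms sin_gt_zero[of x] by simp
  qed simp
  then show ?thesis by simp
qed

lemma three_sin_mult_cos_less:
  assumes "0 < t" "t \<le> pi"
  shows "3 * sin t * cos t < 2 * t + t * ((cos t)\<^sup>2 - (sin t)\<^sup>2)"
proof -
  have "2 * t + t * ((cos t)\<^sup>2 - (sin t)\<^sup>2) - 3 * sin t * cos t > 0"
  proof (rule DERIV_pos_imp_pos_from_zero[OF \<open>0 < t\<close>])
    show "((\<lambda>x. 2 * x + x * ((cos x)\<^sup>2 - (sin x)\<^sup>2) - 3 * sin x * cos x)
        has_real_derivative 4 * sin x * (sin x - x * cos x)) (at x)" for x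
      by (rule derivative_eq_intros refl)+
        (simp add: power2_eq_square, use sin_cos_squared_add3[of x] in algebra)
    show "4 * sin x * (sin x - x * cos x) > 0" if "0 < x" "x < t" for x
      using that assms mult_cos_less_sin[of x] sin_gt_zero[of x] by simp
  qed simp
  then show ?thesis by simp
qed

lemma two_sin_sq_less:
  assumes "0 < t" "t \<le> pi"
  shows "2 * (sin t)\<^sup>2 < t\<^sup>2 + t * sin t * cos t"
proof -
  have "t\<^sup>2 + t * sin t * cos t - 2 * (sin t)\<^sup>2 > 0"
  proof (rule DERIV_pos_imp_pos_from_zero[OF \<open>0 < t\<close>])
    show "((\<lambda>x. x\<^sup>2 + x * sin x * cos x - 2 * (sin x)\<^sup>2) has_real_derivative
        2 * x + x * ((cos x)\<^sup>2 - (sin x)\<^sup>2) - 3 * sin x * cos x) (at x)" for x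
      by (rule derivative_eq_intros refl)+ (simp add: power2_eq_square algebra_simps)
    show "2 * x + x * ((cos x)\<^sup>2 - (sin x)\<^sup>2) - 3 * sin x * cos x > 0" if "0 < x" "x < t" for x
      using that assms three_sin_mult_cos_less[of x] by simp
  qed simp
  then show ?thesis by simp
qed

text \<open>
  The point \<open>(crossing_a T t, crossing_k T t)\<close> is the gain pair \<open>(a, k)\<close> for which the
  characteristic equation \<open>s = a - k e\<^sup>-\<^sup>s\<^sup>T\<close> has the root \<open>s = i t / T\<close>;
  \<open>crossing_slope t\<close> is the slope \<open>dk/da\<close> of this curve.
\<close>

definition crossing_a :: "real \<Rightarrow> real \<Rightarrow> real" where
  "crossing_a T t = t * cos t / (T * sin t)"

definition crossing_k :: "real \<Rightarrow> real \<Rightarrow> real" where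
  "crossing_k T t = t / (T * sin t)"

definition crossing_slope :: "real \<Rightarrow> real" where
  "crossing_slope t = - (sin t - t * cos t) / (t - sin t * cos t)"

lemma crossing_slope_decreasing:
  assumes "0 < x" "x < y" "y < pi"
  shows "crossing_slope y < crossing_slope x"
proof (rule DERIV_neg_imp_decreasing[OF \<open>x < y\<close>])
  fix t assume t: "x \<le> t" "t \<le> y"
  have D: "t - sin t * cos t > 0" "sin t > 0"
    using sin_mult_cos_less[of t] sin_gt_zero[of t] t assms by auto
  have "(crossing_slope has_real_derivative
      - sin t * (t\<^sup>2 + t * sin t * cos t - 2 * (sin t)\<^sup>2) / (t - sin t * cos t)\<^sup>2) (at t)"
    unfolding crossing_slope_def
    by (rule derivative_eq_intros refl)+
      (use D in \<open>simp_all add: power2_eq_square divide_simps\<close>,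
       use sin_cos_squared_add3[of t] in algebra)
  moreover have "- sin t * (t\<^sup>2 + t * sin t * cos t - 2 * (sin t)\<^sup>2) / (t - sin t * cos t)\<^sup>2 < 0"
    using two_sin_sq_less[of t] D t assms by (simp add: divide_neg_pos)
  ultimately show "\<exists>d. (crossing_slope has_real_derivative d) (at t) \<and> d < 0" by blast
qed

lemma crossing_a_eq: "crossing_a T t = crossing_k T t * cos t"
  unfolding crossing_a_def crossing_k_def by simp

lemma has_real_derivative_crossing_a:
  assumes "T \<noteq> 0" "sin t \<noteq> 0"
  shows "(crossing_a T has_real_derivative - (t - sin t * cos t) / (T * (sin t)\<^sup>2)) (at t)"
  unfolding crossing_a_def
  by (rule derivative_eq_intros refl)+
    (use assms in \<open>simp_all add: power2_eq_square divide_simps\<close>,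
     use sin_cos_squared_add3[of t] in algebra)

lemma has_real_derivative_crossing_k:
  assumes "T \<noteq> 0" "sin t \<noteq> 0"
  shows "(crossing_k T has_real_derivative (sin t - t * cos t) / (T * (sin t)\<^sup>2)) (at t)"
  unfolding crossing_k_def
  by (rule derivative_eq_intros refl)+
    (use assms in \<open>simp_all add: power2_eq_square divide_simps\<close>, algebra)

lemma continuous_on_crossing_a: "T \<noteq> 0 \<Longrightarrow> continuous_on {0<..<pi} (crossing_a T)"
  unfolding crossing_a_def by (intro continuous_intros) (use sin_gt_zero in force)

lemma crossing_a_decreasing:
  assumes "T > 0" "0 < x" "x < y" "y < pi"
  shows "crossing_a T y < crossing_a T x"
proof (rule DERIV_neg_imp_decreasing[OF \<open>x < y\<close>])
  fix t assume t: "x \<le> t" "t \<le> y"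
  then have "sin t > 0" "t - sin t * cos t > 0"
    using sin_gt_zero[of t] sin_mult_cos_less[of t] assms by auto
  then show "\<exists>d. (crossing_a T has_real_derivative d) (at t) \<and> d < 0"
    using has_real_derivative_crossing_a[of T t] assms by (auto simp: divide_neg_pos)
qed

lemma crossing_k_increasing:
  assumes "T > 0" "0 < x" "x < y" "y < pi"
  shows "crossing_k T x < crossing_k T y"
proof (rule DERIV_pos_imp_increasing[OF \<open>x < y\<close>])
  fix t assume t: "x \<le> t" "t \<le> y"
  then have "sin t > 0" "sin t - t * cos t > 0"
    using sin_gt_zero[of t] mult_cos_less_sin[of t] assms by auto
  then show "\<exists>d. (crossing_k T has_real_derivative d) (at t) \<and> d > 0"
    using has_real_derivative_crossing_k[of T t] assms by auto
qed

lemma crossing_a_less: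
  assumes "T > 0" "0 < t" "t < pi"
  shows "crossing_a T t < 1 / T"
  using mult_cos_less_sin[of t] sin_gt_zero[of t] assms
  by (simp add: crossing_a_def divide_simps)

lemma tendsto_crossing_a_at_0: "T > 0 \<Longrightarrow> (crossing_a T \<longlongrightarrow> 1 / T) (at_right 0)"
  unfolding crossing_a_def by (real_asymp simp: inverse_eq_divide)

lemma tendsto_crossing_k_at_0: "T > 0 \<Longrightarrow> (crossing_k T \<longlongrightarrow> 1 / T) (at_right 0)"
  unfolding crossing_k_def by (real_asymp simp: inverse_eq_divide)

lemma filterlim_crossing_a_at_pi: "T > 0 \<Longrightarrow> filterlim (crossing_a T) at_bot (at_left pi)"
  unfolding crossing_a_def by real_asymp

lemma crossing_a_surj:
  assumes "T > 0" "a < 1 / T"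
  shows "\<exists>t. 0 < t \<and> t < pi \<and> crossing_a T t = a"
proof -
  have "\<forall>\<^sub>F t in at_right 0. a < crossing_a T t \<and> t \<in> {0<..<pi}"
    using order_tendstoD(1)[OF tendsto_crossing_a_at_0 \<open>a < 1 / T\<close>] assms
    by (intro eventually_conj eventually_at_right_real) auto
  then obtain t1 where t1: "a < crossing_a T t1" "0 < t1" "t1 < pi"
    using eventually_happens'[of "at_right (0::real)"] by auto
  have "\<forall>\<^sub>F t in at_left pi. crossing_a T t \<le> a \<and> t \<in> {t1<..<pi}"
    using filterlim_crossing_a_at_pi[OF \<open>T > 0\<close>] t1
    unfolding filterlim_at_bot by (intro eventually_conj eventually_at_left_real) auto
  then obtain t2 where t2: "crossing_a T t2 \<le> a" "t1 < t2" "t2 < pi"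
    using eventually_happens'[of "at_left pi"] by auto
  have "continuous_on {t1..t2} (crossing_a T)"
    by (rule continuous_on_subset[OF continuous_on_crossing_a]) (use assms t1 t2 in auto)
  then obtain t where "t1 \<le> t" "t \<le> t2" "crossing_a T t = a"
    using IVT2'[of "crossing_a T" t2 a t1] t1 t2 by auto
  with t1 t2 show ?thesis by (intro exI[of _ t]) auto
qed

lemma crossing_a_inj:
  assumes "T > 0" "0 < x" "x < pi" "0 < y" "y < pi" "crossing_a T x = crossing_a T y"
  shows "x = y"
  using crossing_a_decreasing[of T x y] crossing_a_decreasing[of T y x] assms
  by (cases x y rule: linorder_cases) auto

definition crossing_phase :: "real \<Rightarrow> real \<Rightarrow> real" where
  "crossing_phase T a = (THE t. 0 < t \<and> t < pi \<and> crossing_a T t = a)"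

lemma crossing_phase:
  assumes "T > 0" "a < 1 / T"
  shows "0 < crossing_phase T a" "crossing_phase T a < pi"
    and "crossing_a T (crossing_phase T a) = a"
proof -
  have "\<exists>!t. 0 < t \<and> t < pi \<and> crossing_a T t = a"
    using crossing_a_surj[OF assms] crossing_a_inj[OF \<open>T > 0\<close>] by metis
  then have "0 < crossing_phase T a \<and> crossing_phase T a < pi \<and> crossing_a T (crossing_phase T a) = a"
    unfolding crossing_phase_def by (rule theI')
  then show "0 < crossing_phase T a" "crossing_phase T a < pi"
    and "crossing_a T (crossing_phase T a) = a" by auto
qed

lemma crossing_phase_crossing_a:
  assumes "T > 0" "0 < t" "t < pi"
  shows "crossing_phase T (crossing_a T t) = t"
  unfolding crossing_phase_def
  by (rule the_equality) (use assms crossing_a_inj[OF \<open>T > 0\<close>] in auto)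

lemma less_crossing_phase_iff:
  assumes "T > 0" "a < 1 / T" "0 < t" "t < pi"
  shows "t < crossing_phase T a \<longleftrightarrow> a < crossing_a T t"
  using crossing_a_decreasing[of T t "crossing_phase T a"]
    crossing_a_decreasing[of T "crossing_phase T a" t] crossing_phase[OF assms(1,2)] assms
  by (cases t "crossing_phase T a" rule: linorder_cases) auto

lemma crossing_phase_less_iff:
  assumes "T > 0" "a < 1 / T" "0 < t" "t < pi"
  shows "crossing_phase T a < t \<longleftrightarrow> crossing_a T t < a"
  using crossing_a_decreasing[of T t "crossing_phase T a"]
    crossing_a_decreasing[of T "crossing_phase T a" t] crossing_phase[OF assms(1,2)] assms
  by (cases t "crossing_phase T a" rule: linorder_cases) auto

lemma crossing_phase_decreasing:
  assumes "T > 0" "x < y" "y < 1 / T"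
  shows "crossing_phase T y < crossing_phase T x"
  using less_crossing_phase_iff[of T x "crossing_phase T y"] crossing_phase[of T] assms by auto

lemma has_real_derivative_crossing_phase:
  assumes "T > 0" "a < 1 / T"
  defines "t \<equiv> crossing_phase T a"
  shows "(crossing_phase T has_real_derivative
      inverse (- (t - sin t * cos t) / (T * (sin t)\<^sup>2))) (at a)"
proof (rule has_field_derivative_inverse_strong_x[where S = "{0<..<pi}"])
  have t: "0 < t" "t < pi" "crossing_a T t = a"
    using crossing_phase[OF assms(1,2)] unfolding t_def by auto
  have s: "sin t > 0" "t - sin t * cos t > 0"
    using t sin_gt_zero[of t] sin_mult_cos_less[of t] by auto
  then show "- (t - sin t * cos t) / (T * (sin t)\<^sup>2) \<noteq> 0"
    using \<open>T > 0\<close> by simp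
  show "(crossing_a T has_real_derivative - (t - sin t * cos t) / (T * (sin t)\<^sup>2))
      (at (crossing_phase T a))"
    using has_real_derivative_crossing_a[of T t] \<open>T > 0\<close> s unfolding t_def by simp
  show "continuous_on {0<..<pi} (crossing_a T)"
    using continuous_on_crossing_a \<open>T > 0\<close> by simp
  show "crossing_phase T a \<in> {0<..<pi}" "crossing_a T (crossing_phase T a) = a"
    using t unfolding t_def by auto
  show "crossing_phase T (crossing_a T z) = z" if "z \<in> {0<..<pi}" for z
    using crossing_phase_crossing_a[OF \<open>T > 0\<close>] that by auto
qed simp

lemma crossing_solves_equation:
  assumes "T > 0" "0 < t" "t < pi"
  shows "\<bar>crossing_a T t\<bar> < crossing_k T t
    \<and> T * sqrt ((crossing_k T t)\<^sup>2 - (crossing_a T t)\<^sup>2) = arccos (crossing_a T t / crossing_k T t)"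
proof -
  have s: "sin t > 0" using assms sin_gt_zero by auto
  have k: "crossing_k T t > 0" using s assms unfolding crossing_k_def by simp
  have "(sin t)\<^sup>2 > 0" using s by simp
  then have "(cos t)\<^sup>2 < 1" using sin_cos_squared_add[of t] by linarith
  then have "\<bar>cos t\<bar> < 1" by (simp add: abs_square_less_1)
  then have "\<bar>crossing_a T t\<bar> < crossing_k T t"
    using k by (simp add: crossing_a_eq abs_mult)
  moreover have "(crossing_k T t)\<^sup>2 - (crossing_a T t)\<^sup>2 = (crossing_k T t * sin t)\<^sup>2"
    unfolding crossing_a_eq using sin_cos_squared_add[of t] by algebra
  then have "T * sqrt ((crossing_k T t)\<^sup>2 - (crossing_a T t)\<^sup>2) = t"
    using k s assms by (simp add: crossing_k_def)
  moreover have "arccos (crossing_a T t / crossing_k T t) = t"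
    using k assms arccos_cos[of t] by (simp add: crossing_a_eq)
  ultimately show ?thesis by simp
qed

lemma equation_solution_is_crossing:
  assumes "T > 0" "\<bar>a\<bar> < k" "T * sqrt (k\<^sup>2 - a\<^sup>2) = arccos (a / k)"
  defines "t \<equiv> arccos (a / k)"
  shows "0 < t \<and> t < pi \<and> k = crossing_k T t \<and> a = crossing_a T t"
proof -
  have k: "k > 0" using assms by simp
  have ak: "-1 < a / k" "a / k < 1" using assms k by (auto simp: divide_simps abs_less_iff)
  have t: "0 < t" "t < pi" using arccos_lt_bounded[OF ak] unfolding t_def by auto
  have "sin t = sqrt (1 - (a / k)\<^sup>2)" using ak sin_arccos unfolding t_def by simp
  moreover have "k\<^sup>2 - a\<^sup>2 = k\<^sup>2 * (1 - (a / k)\<^sup>2)" using k by (simp add: field_simps)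
  ultimately have "T * k * sin t = t" using assms k unfolding t_def by (simp add: real_sqrt_mult)
  moreover have "sin t > 0" using t sin_gt_zero by auto
  ultimately have "k = crossing_k T t" using assms by (simp add: crossing_k_def field_simps)
  moreover have "cos t = a / k" using ak unfolding t_def by simp
  ultimately show ?thesis using t k by (simp add: crossing_a_eq)
qed

lemma ku_equation_iff:
  assumes "T > 0" "a < 1 / T"
  shows "(\<bar>a\<bar> < k \<and> T * sqrt (k\<^sup>2 - a\<^sup>2) = arccos (a / k))
    \<longleftrightarrow> k = crossing_k T (crossing_phase T a)"
proof
  assume "\<bar>a\<bar> < k \<and> T * sqrt (k\<^sup>2 - a\<^sup>2) = arccos (a / k)"
  then show "k = crossing_k T (crossing_phase T a)"
    using equation_solution_is_crossing[OF \<open>T > 0\<close>] crossing_phase_crossing_a[OF \<open>T > 0\<close>] by metis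
next
  assume "k = crossing_k T (crossing_phase T a)"
  then show "\<bar>a\<bar> < k \<and> T * sqrt (k\<^sup>2 - a\<^sup>2) = arccos (a / k)"
    using crossing_solves_equation[OF \<open>T > 0\<close>] crossing_phase[OF assms] by metis
qed

lemma ku_eq_crossing_k:
  assumes "T > 0" "a < 1 / T"
  shows "ku T a = crossing_k T (crossing_phase T a)"
  unfolding ku_def ku_equation_iff[OF assms] by simp

lemma ku_decreasing:
  assumes "T > 0" "x < y" "y < 1 / T"
  shows "ku T y < ku T x"
  using crossing_k_increasing[of T "crossing_phase T y" "crossing_phase T x"]
    crossing_phase_decreasing[OF assms] crossing_phase[of T] ku_eq_crossing_k[of T] assms
  by auto

lemma has_real_derivative_ku:
  assumes "T > 0" "a < 1 / T"
  shows "(ku T has_real_derivative crossing_slope (crossing_phase T a)) (at a)"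
proof -
  define t where "t = crossing_phase T a"
  have t: "0 < t" "t < pi" using crossing_phase[OF assms] unfolding t_def by auto
  then have "sin t > 0" "t - sin t * cos t > 0"
    using sin_gt_zero[of t] sin_mult_cos_less[of t] by auto
  have "(crossing_k T has_real_derivative (sin t - t * cos t) / (T * (sin t)\<^sup>2)) (at t)"
    using has_real_derivative_crossing_k \<open>T > 0\<close> \<open>sin t > 0\<close> by simp
  from DERIV_chain2[OF this[unfolded t_def] has_real_derivative_crossing_phase[OF assms]]
  have "((\<lambda>x. crossing_k T (crossing_phase T x)) has_real_derivative
      (sin t - t * cos t) / (T * (sin t)\<^sup>2) * inverse (- (t - sin t * cos t) / (T * (sin t)\<^sup>2)))
      (at a)"
    unfolding t_def .
  moreover have "(sin t - t * cos t) / (T * (sin t)\<^sup>2) * inverse (- (t - sin t * cos t) / (T * (sin t)\<^sup>2))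
      = crossing_slope t"
    using \<open>T > 0\<close> \<open>sin t > 0\<close> \<open>t - sin t * cos t > 0\<close>
    by (simp add: crossing_slope_def field_simps)
  ultimately have "((\<lambda>x. crossing_k T (crossing_phase T x)) has_real_derivative crossing_slope t) (at a)"
    by simp
  then show ?thesis
    unfolding t_def
    by (rule has_field_derivative_transform_within_open[where S = "{..<1 / T}"])
      (use assms ku_eq_crossing_k in auto)
qed

lemma convex_on_ku:
  assumes "T > 0"
  shows "convex_on {..<1 / T} (ku T)"
proof (rule convex_on_realI[where f' = "\<lambda>a. crossing_slope (crossing_phase T a)"])
  show "(ku T has_real_derivative crossing_slope (crossing_phase T x)) (at x)"
    if "x \<in> {..<1 / T}" for x
    using has_real_derivative_ku[OF assms] that by simp
  show "crossing_slope (crossing_phase T x) \<le> crossing_slope (crossing_phase T y)"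
    if "x \<in> {..<1 / T}" "y \<in> {..<1 / T}" "x \<le> y" for x y
    using that crossing_slope_decreasing[of "crossing_phase T y" "crossing_phase T x"]
      crossing_phase_decreasing[OF assms, of x y] crossing_phase[OF assms]
    by (cases "x = y") (auto intro: less_imp_le)
qed simp

lemma tendsto_crossing_phase_at_bot:
  assumes "T > 0"
  shows "(crossing_phase T \<longlongrightarrow> pi) at_bot"
proof (rule order_tendstoI)
  have below: "\<forall>\<^sub>F a in at_bot. a < 1 / T" by (rule eventually_gt_at_bot)
  show "\<forall>\<^sub>F a in at_bot. crossing_phase T a < y" if "pi < y" for y
    using below by (rule eventually_mono) (rule less_trans[OF crossing_phase(2)[OF assms] that])
  show "\<forall>\<^sub>F a in at_bot. y < crossing_phase T a" if "y < pi" for y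
  proof (cases "y \<le> 0")
    case True
    show ?thesis
      using below by (rule eventually_mono) (rule le_less_trans[OF True crossing_phase(1)[OF assms]])
  next
    case False
    have "\<forall>\<^sub>F a in at_bot. a < 1 / T \<and> a < crossing_a T y"
      by (intro eventually_conj eventually_gt_at_bot)
    then show ?thesis
      by (rule eventually_mono) (use less_crossing_phase_iff[OF assms] False that in simp)
  qed
qed

lemma filterlim_crossing_phase_at_left:
  assumes "T > 0"
  shows "filterlim (crossing_phase T) (at_right 0) (at_left (1 / T))"
proof -
  have "\<forall>\<^sub>F a in at_left (1 / T). a \<in> {0<..<1 / T}"
    using assms by (intro eventually_at_left_real) simp
  then have below: "\<forall>\<^sub>F a in at_left (1 / T). a < 1 / T"
    by (rule eventually_mono) simp
  have "(crossing_phase T \<longlongrightarrow> 0) (at_left (1 / T))"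
  proof (rule order_tendstoI)
    show "\<forall>\<^sub>F a in at_left (1 / T). y < crossing_phase T a" if "y < 0" for y
      using below by (rule eventually_mono) (rule less_trans[OF that crossing_phase(1)[OF assms]])
    show "\<forall>\<^sub>F a in at_left (1 / T). crossing_phase T a < y" if "0 < y" for y
    proof (cases "y < pi")
      case True
      have "\<forall>\<^sub>F a in at_left (1 / T). a \<in> {crossing_a T y<..<1 / T}"
        using crossing_a_less[OF assms that True] by (rule eventually_at_left_real)
      then show ?thesis
        by (rule eventually_mono) (use crossing_phase_less_iff[OF assms _ that True] in auto)
    next
      case False
      then have "pi \<le> y" by simp
      from below show ?thesis
        by (rule eventually_mono) (rule less_le_trans[OF crossing_phase(2)[OF assms] \<open>pi \<le> y\<close>])
    qed
  qed
  moreover have "\<forall>\<^sub>F a in at_left (1 / T). 0 < crossing_phase T a"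
    using below by (rule eventually_mono) (rule crossing_phase(1)[OF assms])
  ultimately show ?thesis by (rule tendsto_imp_filterlim_at_right)
qed

lemma tendsto_ku_div_abs_at_bot:
  assumes "T > 0"
  shows "((\<lambda>a. ku T a / \<bar>a\<bar>) \<longlongrightarrow> 1) at_bot"
proof -
  have "((\<lambda>a. - 1 / cos (crossing_phase T a)) \<longlongrightarrow> - 1 / cos pi) at_bot"
    by (intro tendsto_intros tendsto_crossing_phase_at_bot[OF assms]) simp
  moreover have "\<forall>\<^sub>F a in at_bot. - 1 / cos (crossing_phase T a) = ku T a / \<bar>a\<bar>"
    using eventually_gt_at_bot[of 0] eventually_gt_at_bot[of "1 / T"]
  proof eventually_elim
    case (elim a)
    define t where "t = crossing_phase T a"
    have t: "0 < t" "t < pi" "a = crossing_k T t * cos t"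
      using crossing_phase[OF assms elim(2)] unfolding t_def crossing_a_eq by auto
    then have k: "crossing_k T t > 0"
      using assms sin_gt_zero[of t] by (simp add: crossing_k_def)
    with t elim(1) have "cos t < 0"
      by (simp add: mult_less_0_iff)
    with t k show ?case
      using ku_eq_crossing_k[OF assms elim(2)] unfolding t_def[symmetric]
      by (simp add: abs_mult field_simps)
  qed
  ultimately show ?thesis by (simp add: tendsto_cong)
qed

lemma tendsto_ku_at_left:
  assumes "T > 0"
  shows "(ku T \<longlongrightarrow> 1 / T) (at_left (1 / T))"
proof -
  have "((\<lambda>a. crossing_k T (crossing_phase T a)) \<longlongrightarrow> 1 / T) (at_left (1 / T))"
    using filterlim_compose[OF tendsto_crossing_k_at_0 filterlim_crossing_phase_at_left, OF assms assms] .
  moreover have "\<forall>\<^sub>F a in at_left (1 / T). a \<in> {0<..<1 / T}"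
    using assms by (intro eventually_at_left_real) simp
  then have "\<forall>\<^sub>F a in at_left (1 / T). crossing_k T (crossing_phase T a) = ku T a"
    by (rule eventually_mono) (simp add: ku_eq_crossing_k[OF assms])
  ultimately show ?thesis by (simp add: tendsto_cong)
qed

theorem proposition1:
  fixes T :: real
  assumes "T > 0"
  shows "(\<forall>a. a * T < 1 \<longrightarrow>
            (\<exists>!k. \<bar>a\<bar> < k \<and> T * sqrt (k\<^sup>2 - a\<^sup>2) = arccos (a / k)))
       \<and> (\<forall>x y. x < y \<and> y < 1 / T \<longrightarrow> ku T y < ku T x)
       \<and> convex_on {..<1 / T} (ku T)
       \<and> ((\<lambda>a. ku T a / \<bar>a\<bar>) \<longlongrightarrow> 1) at_bot
       \<and> (ku T \<longlongrightarrow> 1 / T) (at_left (1 / T))"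
proof (intro conjI allI impI)
  fix a assume "a * T < 1"
  then have "a < 1 / T" using assms by (simp add: field_simps)
  then show "\<exists>!k. \<bar>a\<bar> < k \<and> T * sqrt (k\<^sup>2 - a\<^sup>2) = arccos (a / k)"
    using ku_equation_iff[OF assms] by simp
next
  fix x y assume "x < y \<and> y < 1 / T"
  then show "ku T y < ku T x" using ku_decreasing[OF assms] by blast
qed (use assms convex_on_ku tendsto_ku_div_abs_at_bot tendsto_ku_at_left in blast)+

end
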